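(* Let $m\in\mathbb{Z}^+$ and $r\in\mathbb{Z}$ be relatively prime. Then for any $n\in\mathbb{Z}^+$ (such that $km+r\neq0$ for $0\le k\le n-1$), $$\frac1n\sum_{k=0}^{n-1}\frac1{km+r}\equiv\frac1r+\frac m2[\![2\mid n]\!]\pmod m,$$ where $[\![2\mid n]\!]$ is $1$ if $n$ is even and $0$ otherwise.
   Context: For rational numbers $u,v$, $u\equiv v\pmod m$ means that $(u-v)/m$ is a rational number whose reduced denominator is coprime to $m$. *)

theory Defs
  imports "HOL-Computational_Algebra.Computational_Algebra"
begin

definition rat_cong :: "rat \<Rightarrow> rat \<Rightarrow> int \<Rightarrow> bool" where
  "rat_cong u v m \<longleftrightarrow> coprime (snd (quotient_of ((u - v) / of_int m))) m"

end

theory Submission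
  imports Defs
begin

text \<open>Write \<open>D(n, m, r) = ((1/n) \<Sum>k<n. 1/(km + r) - 1/r - (m/2)[2 | n]) / m\<close>; the claim is
  that the denominator of \<open>D(n, m, r)\<close> is coprime to \<open>m\<close>. We prove this for every \<open>M\<close> with
  \<open>M | m\<close> and \<open>gcd(M, r) = 1\<close>, by induction over the prime factorisation of \<open>n\<close>; these two
  conditions survive the substitution \<open>(m, r) \<mapsto> (am, im + r)\<close>.
  Splitting \<open>k = i + aj\<close> cuts a sum of length \<open>ab\<close> into \<open>a\<close> sums of length \<open>b\<close>, which gives
  \<open>D(ab, m, r) = D(a, m, r) + \<Sum>i<a. D(b, am, im + r)\<close> up to an integer. For a prime length \<open>q\<close>,
  expanding \<open>1/(r + km)\<close> to second order in \<open>km\<close> gives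
  \<open>D(q, m, r) = -(q - 1 + r\<^sup>2 [2 | q]) / (2r\<^sup>2) + (m/q) E\<close>, where \<open>E\<close> is a sum of fractions
  with denominators coprime to \<open>M\<close>; \<open>m/q\<close> is harmless because \<open>q\<close> is prime, and the first
  term because \<open>r\<close> is odd when \<open>M\<close> is even.\<close>

definition denom_coprime :: "int \<Rightarrow> rat \<Rightarrow> bool" where
  "denom_coprime M x \<longleftrightarrow> coprime (snd (quotient_of x)) M"

lemma denom_coprimeE:
  assumes "denom_coprime M x"
  obtains a b where "coprime b M" "b \<noteq> 0" "x = of_int a / of_int b"
proof -
  obtain a b where q: "quotient_of x = (a, b)"
    by (cases "quotient_of x")
  show ?thesis
  proof
    show "coprime b M"
      using assms q unfolding denom_coprime_def by simp
    show "b \<noteq> 0"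
      using quotient_of_denom_pos[OF q] by simp
    show "x = of_int a / of_int b"
      using quotient_of_div[OF q] .
  qed
qed

lemma denom_coprimeI:
  assumes "coprime b M"
  shows "denom_coprime M (of_int a / of_int b)"
proof (cases "b = 0")
  case True
  then show ?thesis by (simp add: denom_coprime_def)
next
  case False
  obtain p q where pq: "quotient_of (of_int a / of_int b) = (p, q)"
    by (cases "quotient_of (of_int a / of_int b :: rat)")
  have "of_int p / of_int q = (of_int a / of_int b :: rat)"
    using quotient_of_div[OF pq] by simp
  then have "p * b = a * q"
    using False quotient_of_denom_pos[OF pq] by (simp add: field_simps flip: of_int_mult)
  then have "q dvd p * b"
    by simp
  then have "q dvd b"
    using quotient_of_coprime[OF pq] by (metis coprime_commute coprime_dvd_mult_right_iff)
  then have "coprime q M"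
    using assms by (meson coprime_divisors dvd_refl)
  then show ?thesis
    using pq by (simp add: denom_coprime_def)
qed

lemma denom_coprime_of_int: "denom_coprime M (of_int a)"
  using denom_coprimeI[of 1 M a] by simp

lemma denom_coprime_add:
  assumes "denom_coprime M x" "denom_coprime M y"
  shows "denom_coprime M (x + y)"
proof -
  obtain a b where ab: "coprime b M" "b \<noteq> 0" "x = of_int a / of_int b"
    using assms(1) by (rule denom_coprimeE)
  obtain c d where cd: "coprime d M" "d \<noteq> 0" "y = of_int c / of_int d"
    using assms(2) by (rule denom_coprimeE)
  have "x + y = of_int (a * d + c * b) / of_int (b * d)"
    using ab cd by (simp add: field_simps)
  moreover have "coprime (b * d) M"
    using ab cd by simp
  ultimately show ?thesis
    by (simp only: denom_coprimeI)
qed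

lemma denom_coprime_mult:
  assumes "denom_coprime M x" "denom_coprime M y"
  shows "denom_coprime M (x * y)"
proof -
  obtain a b where ab: "coprime b M" "b \<noteq> 0" "x = of_int a / of_int b"
    using assms(1) by (rule denom_coprimeE)
  obtain c d where cd: "coprime d M" "d \<noteq> 0" "y = of_int c / of_int d"
    using assms(2) by (rule denom_coprimeE)
  have "x * y = of_int (a * c) / of_int (b * d)"
    using ab cd by (simp flip: of_int_mult)
  moreover have "coprime (b * d) M"
    using ab cd by simp
  ultimately show ?thesis
    by (simp only: denom_coprimeI)
qed

lemma denom_coprime_sum:
  "(\<And>i. i \<in> A \<Longrightarrow> denom_coprime M (f i)) \<Longrightarrow> denom_coprime M (\<Sum>i\<in>A. f i)"
  by (induction A rule: infinite_finite_induct)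
    (auto intro: denom_coprime_add simp: denom_coprime_of_int[of M 0, simplified])

lemma denom_coprime_divide_double:
  assumes "coprime b M" and "even M \<Longrightarrow> even a"
  shows "denom_coprime M (of_int a / of_int (2 * b))"
proof (cases "even M")
  case True
  then obtain t where "a = 2 * t"
    using assms(2) by blast
  then have "(of_int a / of_int (2 * b) :: rat) = of_int t / of_int b"
    by simp
  then show ?thesis
    using denom_coprimeI[OF assms(1)] by simp
next
  case False
  then have "coprime 2 M"
    by (intro prime_imp_coprime) auto
  then show ?thesis
    using assms(1) by (intro denom_coprimeI) simp
qed

lemma coprime_add_multiple:
  fixes M m r k :: int
  assumes "M dvd m" "coprime M r"
  shows "coprime M (k * m + r)"
proof -
  obtain c where "m = M * c"
    using assms(1) by blast
  then have "gcd M (k * m + r) = gcd M ((k * c) * M + r)"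
    by (simp add: ac_simps)
  also have "\<dots> = gcd M r"
    by (rule gcd_add_mult)
  finally show ?thesis
    using assms(2) by (simp add: coprime_iff_gcd_eq_1)
qed

definition recip_sum :: "nat \<Rightarrow> int \<Rightarrow> int \<Rightarrow> rat" where
  "recip_sum n m r = (\<Sum>k<n. 1 / of_int (int k * m + r))"

definition recip_defect :: "nat \<Rightarrow> int \<Rightarrow> int \<Rightarrow> rat" where
  "recip_defect n m r =
     (recip_sum n m r / of_nat n - 1 / of_int r - of_int m / 2 * of_bool (even n)) / of_int m"

lemma recip_sum_eq_defect:
  assumes "n > 0" "m \<noteq> 0"
  shows "recip_sum n m r = of_nat n *
    (1 / of_int r + of_int m / 2 * of_bool (even n) + of_int m * recip_defect n m r)"
  using assms unfolding recip_defect_def by (simp add: field_simps)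

lemma recip_defect_one: "recip_defect 1 m r = 0"
  by (simp add: recip_defect_def recip_sum_def)

lemma sum_lessThan_mult:
  fixes a b :: nat
  shows "(\<Sum>k<a * b. f k) = (\<Sum>i<a. \<Sum>j<b. f (i + a * j))"
proof (induction b)
  case 0
  then show ?case by simp
next
  case (Suc b)
  have "(\<Sum>k<a * Suc b. f k) = (\<Sum>k<a * b. f k) + (\<Sum>k\<in>{a * b..<a * b + a}. f k)"
    by (simp add: lessThan_atLeast0 sum.atLeastLessThan_concat add.commute)
  also have "(\<Sum>k\<in>{a * b..<a * b + a}. f k) = (\<Sum>i<a. f (i + a * b))"
    using sum.shift_bounds_nat_ivl[of f 0 "a * b" a] by (simp add: lessThan_atLeast0 add.commute)
  finally show ?case
    using Suc by (simp add: sum.distrib)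
qed

lemma recip_sum_mult:
  "recip_sum (a * b) m r = (\<Sum>i<a. recip_sum b (int a * m) (int i * m + r))"
  unfolding recip_sum_def sum_lessThan_mult by (intro sum.cong refl) (simp add: algebra_simps)

lemma recip_defect_mult:
  assumes "a > 0" "b > 0" "m \<noteq> 0"
  shows "recip_defect (a * b) m r = recip_defect a m r
    + (\<Sum>i<a. recip_defect b (int a * m) (int i * m + r))
    + of_int (of_bool (even a) + int a * of_bool (even b) - of_bool (even (a * b))) / 2"
proof -
  define D where "D i = recip_defect b (int a * m) (int i * m + r)" for i
  have "recip_sum (a * b) m r = (\<Sum>i<a. of_nat b * (1 / of_int (int i * m + r)
      + of_int (int a * m) / 2 * of_bool (even b) + of_int (int a * m) * D i))"
    unfolding recip_sum_mult D_def using assms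
    by (intro sum.cong refl recip_sum_eq_defect) simp_all
  also have "\<dots> = of_nat b * (recip_sum a m r
      + of_nat a * (of_int (int a * m) / 2 * of_bool (even b)) + of_int (int a * m) * (\<Sum>i<a. D i))"
    by (simp add: recip_sum_def sum.distrib sum_distrib_left distrib_left)
  finally have "recip_sum (a * b) m r = of_nat b * (of_nat a *
      (1 / of_int r + of_int m / 2 * of_bool (even a) + of_int m * recip_defect a m r)
      + of_nat a * (of_int (int a * m) / 2 * of_bool (even b)) + of_int (int a * m) * (\<Sum>i<a. D i))"
    unfolding recip_sum_eq_defect[OF assms(1,3)] .
  then show ?thesis
    unfolding recip_defect_def[of "a * b"] D_def using assms by (simp add: field_simps)
qed

lemma even_parity_excess:
  "even (of_bool (even a) + int a * of_bool (even b) - of_bool (even (a * b)) :: int)"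
  by (cases "even a"; cases "even b") auto

lemma denom_coprime_recip_defect_mult:
  assumes "a > 0" "b > 0" "M dvd m" "coprime M r" "m \<noteq> 0" "\<forall>k<a * b. int k * m + r \<noteq> 0"
    and defect_a: "denom_coprime M (recip_defect a m r)"
    and defect_b: "\<And>m' r'. M dvd m' \<Longrightarrow> coprime M r' \<Longrightarrow> m' \<noteq> 0 \<Longrightarrow>
      \<forall>k<b. int k * m' + r' \<noteq> 0 \<Longrightarrow> denom_coprime M (recip_defect b m' r')"
  shows "denom_coprime M (recip_defect (a * b) m r)"
proof -
  have "denom_coprime M (recip_defect b (int a * m) (int i * m + r))" if "i < a" for i
  proof (rule defect_b)
    show "M dvd int a * m" "coprime M (int i * m + r)" "int a * m \<noteq> 0"
      using assms(1,3-5) coprime_add_multiple by auto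
    show "\<forall>k<b. int k * (int a * m) + (int i * m + r) \<noteq> 0"
    proof (intro allI impI)
      fix k assume "k < b"
      have "i + a * k < a * (k + 1)"
        using \<open>i < a\<close> by simp
      also have "\<dots> \<le> a * b"
        using \<open>k < b\<close> by (intro mult_le_mono2) simp
      finally have "int (i + a * k) * m + r \<noteq> 0"
        using assms(6) by blast
      then show "int k * (int a * m) + (int i * m + r) \<noteq> 0"
        by (simp add: algebra_simps)
    qed
  qed
  moreover obtain t where "of_bool (even a) + int a * of_bool (even b) - of_bool (even (a * b)) = 2 * t"
    using even_parity_excess by blast
  ultimately show ?thesis
    unfolding recip_defect_mult[OF assms(1,2,5)]
    by (auto intro!: denom_coprime_add defect_a denom_coprime_sum simp: denom_coprime_of_int)
qed

lemma reciprocal_add_second_order: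
  fixes x y :: "'a :: field"
  assumes "x \<noteq> 0" "x + y \<noteq> 0"
  shows "1 / (x + y) = 1 / x - y / x ^ 2 + y ^ 2 / (x ^ 2 * (x + y))"
proof -
  have "1 / x - y / x ^ 2 + y ^ 2 / (x ^ 2 * (x + y)) = ((x - y) * (x + y) + y ^ 2) / (x ^ 2 * (x + y))"
    using assms by (simp add: divide_simps power2_eq_square)
  also have "(x - y) * (x + y) + y ^ 2 = x ^ 2"
    by (simp add: algebra_simps power2_eq_square)
  finally show ?thesis
    using assms by simp
qed

lemma recip_defect_eq_remainder:
  assumes "q > 0" "m \<noteq> 0" "\<forall>k<q. int k * m + r \<noteq> 0"
  shows "recip_defect q m r =
    - (of_nat q - 1 + of_int r ^ 2 * of_bool (even q)) / (2 * of_int r ^ 2)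
    + of_int m / of_nat q * (\<Sum>k<q. of_int (int k ^ 2) / of_int (r ^ 2 * (int k * m + r)))"
proof -
  define E where "E = (\<Sum>k<q. of_int (int k ^ 2) / of_int (r ^ 2 * (int k * m + r)) :: rat)"
  have "r \<noteq> 0"
    using assms(1,3) by auto
  have expand: "1 / (of_int (int k * m + r) :: rat) = 1 / of_int r - of_int m * of_nat k / of_int r ^ 2
      + of_int m ^ 2 * (of_int (int k ^ 2) / of_int (r ^ 2 * (int k * m + r)))" if "k < q" for k
  proof -
    have "(of_int (int k * m + r) :: rat) = of_int r + of_int m * of_nat k"
      by simp
    moreover have "(of_int r + of_int m * of_nat k :: rat) \<noteq> 0"
      using assms(3) that by (metis calculation of_int_eq_0_iff)
    ultimately show ?thesis
      using reciprocal_add_second_order[of "of_int r :: rat" "of_int m * of_nat k"] \<open>r \<noteq> 0\<close>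
      by (simp add: power_mult_distrib ac_simps)
  qed
  have gauss: "(\<Sum>k<n. (of_nat k :: rat)) = of_nat n * (of_nat n - 1) / 2" for n
    by (induction n) (simp_all add: field_simps)
  have "recip_sum q m r = (\<Sum>k<q. 1 / of_int r - of_int m * of_nat k / of_int r ^ 2
      + of_int m ^ 2 * (of_int (int k ^ 2) / of_int (r ^ 2 * (int k * m + r))))"
    unfolding recip_sum_def by (intro sum.cong refl) (simp only: expand lessThan_iff)
  also have "\<dots> = of_nat q / of_int r - of_int m / of_int r ^ 2 * (\<Sum>k<q. of_nat k) + of_int m ^ 2 * E"
    unfolding E_def sum.distrib sum_subtractf sum_distrib_left sum_divide_distrib by simp
  finally have sum_eq: "recip_sum q m r =
      of_nat q / of_int r - of_int m / of_int r ^ 2 * (of_nat q * (of_nat q - 1) / 2) + of_int m ^ 2 * E"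
    unfolding gauss .
  show ?thesis
    unfolding recip_defect_def sum_eq E_def[symmetric] using assms(1,2) \<open>r \<noteq> 0\<close>
    by (simp add: field_simps power2_eq_square)
qed

lemma denom_coprime_recip_defect_prime:
  assumes "prime q" "M dvd m" "coprime M r" "m \<noteq> 0" "\<forall>k<q. int k * m + r \<noteq> 0"
  shows "denom_coprime M (recip_defect q m r)"
proof -
  have "q > 0"
    using assms(1) prime_gt_0_nat by blast
  have "coprime (r ^ 2) M"
    using assms(3) by (simp add: coprime_commute)
  have main_term: "denom_coprime M (of_int (- (int q - 1 + r ^ 2 * of_bool (even q))) / of_int (2 * r ^ 2))"
  proof (rule denom_coprime_divide_double[OF \<open>coprime (r ^ 2) M\<close>])
    assume "even M"
    then have "odd r"
      using assms(3) coprime_common_divisor[of M r 2] by auto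
    show "even (- (int q - 1 + r ^ 2 * of_bool (even q)))"
    proof (cases "even q")
      case True
      then have "q = 2"
        using assms(1) primes_dvd_imp_eq two_is_prime_nat by blast
      then show ?thesis
        using \<open>odd r\<close> by simp
    next
      case False
      then show ?thesis by simp
    qed
  qed
  have ratio: "denom_coprime M (of_int m / of_nat q)"
  proof (cases "int q dvd m")
    case True
    then obtain c where "m = int q * c" ..
    then show ?thesis
      using \<open>q > 0\<close> denom_coprime_of_int[of M c] by simp
  next
    case False
    then have "\<not> int q dvd M"
      using assms(2) dvd_trans by blast
    then have "coprime (int q) M"
      using assms(1) by (intro prime_imp_coprime) simp_all
    then show ?thesis
      using denom_coprimeI[of "int q" M m] by simp
  qed
  have remainder_terms: "denom_coprime M (of_int (int k ^ 2) / of_int (r ^ 2 * (int k * m + r)))" for k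
    using \<open>coprime (r ^ 2) M\<close> coprime_add_multiple[OF assms(2,3), of "int k"]
    by (intro denom_coprimeI) (simp add: coprime_commute)
  have "recip_defect q m r = of_int (- (int q - 1 + r ^ 2 * of_bool (even q))) / of_int (2 * r ^ 2)
      + of_int m / of_nat q * (\<Sum>k<q. of_int (int k ^ 2) / of_int (r ^ 2 * (int k * m + r)))"
    using recip_defect_eq_remainder[OF \<open>q > 0\<close> assms(4,5)] by simp
  then show ?thesis
    by (simp only:) (intro denom_coprime_add denom_coprime_mult denom_coprime_sum
        main_term ratio remainder_terms)
qed

lemma denom_coprime_recip_defect:
  assumes "n > 0" "M dvd m" "coprime M r" "m \<noteq> 0" "\<forall>k<n. int k * m + r \<noteq> 0"
  shows "denom_coprime M (recip_defect n m r)"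
  using assms
proof (induction n arbitrary: m r rule: prime_divisors_induct)
  case zero
  then show ?case by simp
next
  case (unit n)
  then show ?case
    using denom_coprime_of_int[of M 0] recip_defect_one[of m r] by simp
next
  case (factor q n)
  then have "q > 0" "n > 0"
    using prime_gt_0_nat by auto
  have "q \<le> q * n"
    using \<open>n > 0\<close> by simp
  then have "\<forall>k<q. int k * m + r \<noteq> 0"
    using factor.prems(5) order.strict_trans2 by blast
  with factor.hyps(1) factor.prems(2-4) have "denom_coprime M (recip_defect q m r)"
    by (rule denom_coprime_recip_defect_prime)
  moreover have "denom_coprime M (recip_defect n m' r')"
    if "M dvd m'" "coprime M r'" "m' \<noteq> 0" "\<forall>k<n. int k * m' + r' \<noteq> 0" for m' r'
    using factor.IH[OF \<open>n > 0\<close> that] .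
  ultimately show ?case
    by (rule denom_coprime_recip_defect_mult[OF \<open>q > 0\<close> \<open>n > 0\<close> factor.prems(2-5)])
qed

theorem lemma3p1:
  fixes m r :: int and n :: nat
  assumes "m > 0" and "coprime m r" and "n > 0"
    and "\<forall>k<n. int k * m + r \<noteq> 0"
  shows "rat_cong ((1 / of_nat n) * (\<Sum>k<n. 1 / of_int (int k * m + r)))
                  (1 / of_int r + of_int m / 2 * (if even n then 1 else 0)) m"
proof -
  have "denom_coprime m (recip_defect n m r)"
    using assms by (intro denom_coprime_recip_defect) simp_all
  moreover have "recip_defect n m r = ((1 / of_nat n) * (\<Sum>k<n. 1 / of_int (int k * m + r))
      - (1 / of_int r + of_int m / 2 * (if even n then 1 else 0))) / of_int m"
    by (simp add: recip_defect_def recip_sum_def)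
  ultimately show ?thesis
    unfolding rat_cong_def denom_coprime_def by simp
qed

end
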